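(* Let $X = X_1 \times \dots \times X_d$ be a product of finite sets, and let $\big((\overline{Y}_S, \overline{Y}^{\,\circ}_S, F_S, A_S)\,:\, S \subseteq [d]\big)$ be an additive-restrictive system on $X$. Let $\delta$ be the density of $\overline{Y}^{\,\circ}_{\emptyset}$ in $X$, and let $|A|$ be the maximum of $|A_S|$ over $S\subseteq[d]$. Then for every $S \subseteq [d]$, the density of $\overline{Y}^{\,\circ}_{S}$ in $\overline{X}_{S}$ is at least $\delta^{2^{|S|}}|A|^{-3^{|S|}}$.
   Context: $[d]=\{1,\dots,d\}$. For $S \subseteq [d]$, $\overline{X}_S = \prod_{i=1}^d W_i$ where $W_i = X_i\times X_i$ if $i \in S$ and $W_i = X_i$ otherwise; $\pi_i$ is projection to the $i$-th factor, and on $X_i\times X_i$ the two projections are $\pi_0,\pi_1$. For $S_0\subseteq[d]$, $\pi_{S_0}$ is projection to the factors indexed by $S_0$. For $\bar x\in\overline{X}_S$ and $T\subseteq S$, with $U=S-T$, set $\widehat{x}(T)=\{\bar y\in\overline{X}_T : \pi_i(\bar y)\in\{\pi_0(\pi_i(\bar x)),\pi_1(\pi_i(\bar x))\}\text{ for } i\in U,\ \pi_{[d]-U}(\bar y)=\pi_{[d]-U}(\bar x)\}$. An additive-restrictive system is a family $(\overline{Y}_S,\overline{Y}^{\,\circ}_S,F_S,A_S)_{S\subseteq[d]}$ such that: each $A_S$ is an abelian group, $\overline{Y}^{\,\circ}_S\subseteq\overline{Y}_S\subseteq\overline{X}_S$, and $F_S:\overline{Y}_S\to A_S$ is a function with $F_S^{-1}(0)=\overline{Y}^{\,\circ}_S$;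 for nonempty $S$, $\overline{Y}_S=\{\bar x\in\overline{X}_S:\widehat{x}(T)\subseteq\overline{Y}^{\,\circ}_T\text{ for all } T\subsetneq S\}$; and (additivity) whenever $s\in S$ and $\bar x_1,\bar x_2,\bar x_3\in\overline{Y}_S$ agree in all coordinates other than $s$ and satisfy $\pi_s(\bar x_1)=(p_1,p_2)$, $\pi_s(\bar x_2)=(p_2,p_3)$, $\pi_s(\bar x_3)=(p_1,p_3)$ for some $p_1,p_2,p_3\in X_s$, we have $F_S(\bar x_1)+F_S(\bar x_2)=F_S(\bar x_3)$. *)

theory Defs
  imports Complex_Main "HOL-Algebra.Group"
begin

text \<open>A point of Xbar_S is an extensional function on {1..d}: coordinate i carries
  Inl a (a in X i) if i is not in S, and Inr (a,b) (a,b in X i) if i is in S.\<close>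

definition Xbar :: "nat \<Rightarrow> (nat \<Rightarrow> 'a set) \<Rightarrow> nat set \<Rightarrow> (nat \<Rightarrow> 'a + 'a \<times> 'a) set" where
  "Xbar d X S = PiE {1..d} (\<lambda>i. if i \<in> S then Inr ` (X i \<times> X i) else Inl ` X i)"

definition xhat :: "nat \<Rightarrow> (nat \<Rightarrow> 'a set) \<Rightarrow> nat set \<Rightarrow> (nat \<Rightarrow> 'a + 'a \<times> 'a)
    \<Rightarrow> nat set \<Rightarrow> (nat \<Rightarrow> 'a + 'a \<times> 'a) set" where
  "xhat d X S x T = {y \<in> Xbar d X T.
      (\<forall>i \<in> S - T. \<exists>p. x i = Inr p \<and> (y i = Inl (fst p) \<or> y i = Inl (snd p))) \<and>
      (\<forall>i \<in> {1..d} - (S - T). y i = x i)}"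

definition additive_restrictive_system ::
  "nat \<Rightarrow> (nat \<Rightarrow> 'a set) \<Rightarrow> (nat set \<Rightarrow> (nat \<Rightarrow> 'a + 'a \<times> 'a) set)
   \<Rightarrow> (nat set \<Rightarrow> (nat \<Rightarrow> 'a + 'a \<times> 'a) set)
   \<Rightarrow> (nat set \<Rightarrow> (nat \<Rightarrow> 'a + 'a \<times> 'a) \<Rightarrow> 'b)
   \<Rightarrow> (nat set \<Rightarrow> 'b monoid) \<Rightarrow> bool" where
  "additive_restrictive_system d X Y Yo F A \<longleftrightarrow>
     (\<forall>S \<subseteq> {1..d}.
        comm_group (A S) \<and>
        Yo S \<subseteq> Y S \<and> Y S \<subseteq> Xbar d X S \<and>
        F S \<in> Y S \<rightarrow> carrier (A S) \<and>
        {x \<in> Y S. F S x = \<one>\<^bsub>A S\<^esub>} = Yo S \<and>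
        (S \<noteq> {} \<longrightarrow> Y S = {x \<in> Xbar d X S. \<forall>T. T \<subset> S \<longrightarrow> xhat d X S x T \<subseteq> Yo T}) \<and>
        (\<forall>s \<in> S. \<forall>x1 x2 x3 p1 p2 p3.
            x1 \<in> Y S \<longrightarrow> x2 \<in> Y S \<longrightarrow> x3 \<in> Y S \<longrightarrow>
            (\<forall>i. i \<noteq> s \<longrightarrow> x1 i = x2 i \<and> x1 i = x3 i) \<longrightarrow>
            x1 s = Inr (p1, p2) \<longrightarrow> x2 s = Inr (p2, p3) \<longrightarrow> x3 s = Inr (p1, p3) \<longrightarrow>
            F S x1 \<otimes>\<^bsub>A S\<^esub> F S x2 = F S x3))"

definition density :: "'c set \<Rightarrow> 'c set \<Rightarrow> real" where
  "density B C = real (card B) / real (card C)"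

end

theory Submission
  imports Defs "HOL-Analysis.Convex"
begin

text \<open>Induction on |S|, removing one coordinate s at a time. Fix a point w of all coordinates
  other than s, and call a good if w(s := a) lies in Yo (S - {s}). A pair (a, b) completes w
  to a point of Yo S exactly when a and b are good and each of the 3 ^ |S - {s}| faces of
  w(s := (a, b)) that keep coordinate s lies in the corresponding Yo. Checking these faces in
  order of increasing dimension, the F-value of a face is defined and additive in (a, b) as
  soon as its lower faces pass, so it is a cocycle on the classes found so far, and its
  vanishing splits each class into at most |A| classes. Hence the completing pairs are the
  pairs within one class of a partition of the good points into at most |A| ^ 3 ^ |S - {s}|
  classes, and Cauchy-Schwarz, first within the slice and then over all w, gives
  density (Yo S) \<ge> density (Yo (S - {s})) ^ 2 / |A| ^ 3 ^ |S - {s}|.\<close>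

lemma sum_squared_le_card_times_sum_squares_nat:
  fixes g :: "'i \<Rightarrow> nat"
  shows "(\<Sum>i\<in>I. g i)\<^sup>2 \<le> card I * (\<Sum>i\<in>I. (g i)\<^sup>2)"
proof -
  have "real ((\<Sum>i\<in>I. g i)\<^sup>2) \<le> real (card I * (\<Sum>i\<in>I. (g i)\<^sup>2))"
    using sum_squared_le_sum_of_squares[of "\<lambda>i. real (g i)" I] by (simp add: mult.commute)
  then show ?thesis
    by (simp only: of_nat_le_iff)
qed

lemma card_squared_le_card_same_label_pairs:
  assumes "finite V"
  shows "(card V)\<^sup>2 \<le> card {(a, b) \<in> V \<times> V. L a = L b} * card (L ` V)"
proof -
  let ?C = "\<lambda>c. {v \<in> V. L v = c}"
  have "{(a, b) \<in> V \<times> V. L a = L b} = (\<Union>c\<in>L ` V. ?C c \<times> ?C c)"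
    by auto
  also have "card \<dots> = (\<Sum>c\<in>L ` V. card (?C c \<times> ?C c))"
    using assms by (intro card_UN_disjoint) auto
  finally have pairs: "card {(a, b) \<in> V \<times> V. L a = L b} = (\<Sum>c\<in>L ` V. (card (?C c))\<^sup>2)"
    by (simp add: card_cartesian_product power2_eq_square)
  have "card V = card (\<Union>c\<in>L ` V. ?C c)"
    by (rule arg_cong[where f = card]) auto
  also have "\<dots> = (\<Sum>c\<in>L ` V. card (?C c))"
    using assms by (intro card_UN_disjoint) auto
  finally have "card V = (\<Sum>c\<in>L ` V. card (?C c))" .
  then show ?thesis
    unfolding pairs using sum_squared_le_card_times_sum_squares_nat[of "\<lambda>c. card (?C c)" "L ` V"]
    by (simp add: mult.commute)
qed

text \<open>Partitions of V are encoded as labellings by lists, so that a refinement step can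
  prepend one group element to each label.\<close>
lemma refine_labelling_by_cocycle:
  fixes L :: "'a \<Rightarrow> 'b list" and G :: "'b monoid"
  assumes "finite V" and "group G" and "finite (carrier G)"
    and closed: "\<And>a b. a \<in> V \<Longrightarrow> b \<in> V \<Longrightarrow> L a = L b \<Longrightarrow> f a b \<in> carrier G"
    and cocycle: "\<And>a b c. a \<in> V \<Longrightarrow> b \<in> V \<Longrightarrow> c \<in> V \<Longrightarrow> L a = L b \<Longrightarrow> L b = L c \<Longrightarrow>
                    f a b \<otimes>\<^bsub>G\<^esub> f b c = f a c"
  shows "\<exists>L' :: 'a \<Rightarrow> 'b list.
           (\<forall>a\<in>V. \<forall>b\<in>V. L' a = L' b \<longleftrightarrow> L a = L b \<and> f a b = \<one>\<^bsub>G\<^esub>)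
         \<and> card (L' ` V) \<le> card (L ` V) * card (carrier G)"
proof -
  interpret group G by fact
  text \<open>Fix a base point r in each class of L; then f a b = inv (f r a) \<otimes> f r b,
    so f a b = \<one> exactly when f r a = f r b.\<close>
  define base where "base a = (SOME r. r \<in> V \<and> L r = L a)" for a
  have base: "base a \<in> V" "L (base a) = L a" if "a \<in> V" for a
    using someI[of "\<lambda>r. r \<in> V \<and> L r = L a" a] that unfolding base_def by auto
  define L' where "L' a = f (base a) a # L a" for a
  have "L' a = L' b \<longleftrightarrow> L a = L b \<and> f a b = \<one>\<^bsub>G\<^esub>" if ab: "a \<in> V" "b \<in> V" for a b
  proof (cases "L a = L b")
    case True
    have same_base: "base b = base a"
      using True unfolding base_def by simp
    have "f (base a) b = f (base a) a \<otimes>\<^bsub>G\<^esub> f a b"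
      using cocycle[OF base(1) ab] base(2) True ab by simp
    moreover have "f (base a) a \<in> carrier G" "f a b \<in> carrier G"
      using closed base ab True by auto
    ultimately show ?thesis
      unfolding L'_def using True same_base by auto
  qed (simp add: L'_def)
  moreover have "L' ` V \<subseteq> (\<lambda>(g, l). g # l) ` (carrier G \<times> L ` V)"
    using closed base unfolding L'_def by force
  then have "card (L' ` V) \<le> card (carrier G \<times> L ` V)"
    using assms(1,3) by (meson card_image_le card_mono finite_SigmaI finite_imageI order_trans)
  ultimately show ?thesis
    by (intro exI[of _ L']) (simp add: card_cartesian_product mult.commute)
qed

lemma refine_labelling_by_test:
  fixes L :: "'a \<Rightarrow> 'b list" and G :: "'b monoid"
  assumes "finite V" and "group G" and "finite (carrier G)"
    and L: "\<forall>a\<in>V. \<forall>b\<in>V. L a = L b \<longleftrightarrow> P a b"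
    and key: "\<And>a b. a \<in> V \<Longrightarrow> b \<in> V \<Longrightarrow> P a b \<Longrightarrow> f a b \<in> carrier G \<and> (Q a b \<longleftrightarrow> f a b = \<one>\<^bsub>G\<^esub>)"
    and cocycle: "\<And>a b c. a \<in> V \<Longrightarrow> b \<in> V \<Longrightarrow> c \<in> V \<Longrightarrow> P a b \<Longrightarrow> P b c \<Longrightarrow> P a c \<Longrightarrow>
                    f a b \<otimes>\<^bsub>G\<^esub> f b c = f a c"
  shows "\<exists>L' :: 'a \<Rightarrow> 'b list. (\<forall>a\<in>V. \<forall>b\<in>V. L' a = L' b \<longleftrightarrow> P a b \<and> Q a b)
           \<and> card (L' ` V) \<le> card (L ` V) * card (carrier G)"
proof -
  obtain L' :: "'a \<Rightarrow> 'b list" where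
      L': "\<forall>a\<in>V. \<forall>b\<in>V. L' a = L' b \<longleftrightarrow> L a = L b \<and> f a b = \<one>\<^bsub>G\<^esub>"
      and card_L': "card (L' ` V) \<le> card (L ` V) * card (carrier G)"
  proof (rule refine_labelling_by_cocycle[OF assms(1-3), of L f, THEN exE])
    show "\<And>a b. a \<in> V \<Longrightarrow> b \<in> V \<Longrightarrow> L a = L b \<Longrightarrow> f a b \<in> carrier G"
      using L key by blast
    show "\<And>a b c. a \<in> V \<Longrightarrow> b \<in> V \<Longrightarrow> c \<in> V \<Longrightarrow> L a = L b \<Longrightarrow> L b = L c \<Longrightarrow>
            f a b \<otimes>\<^bsub>G\<^esub> f b c = f a c"
      using L cocycle by (metis (no_types, lifting))
  qed (use that in blast)
  moreover have "\<forall>a\<in>V. \<forall>b\<in>V. L' a = L' b \<longleftrightarrow> P a b \<and> Q a b"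
    using L' L key by blast
  ultimately show ?thesis
    by blast
qed

definition rank_closed :: "'d set \<Rightarrow> ('d \<Rightarrow> nat) \<Rightarrow> 'd set \<Rightarrow> bool" where
  "rank_closed D rk E \<longleftrightarrow> (\<forall>x\<in>E. \<forall>y\<in>D. rk y < rk x \<longrightarrow> y \<in> E)"

lemma rank_closed_remove_max:
  assumes "finite E" and "E \<noteq> {}" and "rank_closed D rk E"
  obtains x where "x \<in> E" and "rank_closed D rk (E - {x})"
    and "\<And>y. y \<in> D \<Longrightarrow> rk y < rk x \<Longrightarrow> y \<in> E - {x}"
proof -
  obtain x where x: "x \<in> E" and x_max: "\<And>y. y \<in> E \<Longrightarrow> rk y \<le> rk x"
    using Max_in[of "rk ` E"] Max_ge[of "rk ` E"] assms(1,2) by fastforce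
  have lower: "y \<in> E - {x}" if "y \<in> D" "rk y < rk x" for y
    using assms(3) x that unfolding rank_closed_def by blast
  have "rank_closed D rk (E - {x})"
    unfolding rank_closed_def
  proof (intro ballI impI)
    fix z y assume "z \<in> E - {x}" "y \<in> D" "rk y < rk z"
    then have "rk y < rk x"
      using x_max by (meson DiffD1 order_less_le_trans)
    then show "y \<in> E - {x}"
      using lower \<open>y \<in> D\<close> by blast
  qed
  then show ?thesis
    using that x lower by blast
qed

text \<open>The tests x \<in> D are applied in order of increasing rank; each one is a cocycle on the
  classes cut out by the tests of lower rank, so it splits each class into at most M parts.\<close>
lemma iterated_refinement:
  fixes V :: "'a set" and D :: "'d set" and rk :: "'d \<Rightarrow> nat"
    and G :: "'d \<Rightarrow> 'b monoid" and f :: "'d \<Rightarrow> 'a \<Rightarrow> 'a \<Rightarrow> 'b" and Q :: "'d \<Rightarrow> 'a \<Rightarrow> 'a \<Rightarrow> bool"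
  assumes "finite V" and "finite D"
    and groups: "\<And>x. x \<in> D \<Longrightarrow> group (G x) \<and> finite (carrier (G x)) \<and> card (carrier (G x)) \<le> M"
    and key: "\<And>x a b. x \<in> D \<Longrightarrow> a \<in> V \<Longrightarrow> b \<in> V \<Longrightarrow> (\<forall>y\<in>D. rk y < rk x \<longrightarrow> Q y a b) \<Longrightarrow>
               f x a b \<in> carrier (G x) \<and> (Q x a b \<longleftrightarrow> f x a b = \<one>\<^bsub>G x\<^esub>)"
    and cocycle: "\<And>x a b c. x \<in> D \<Longrightarrow> a \<in> V \<Longrightarrow> b \<in> V \<Longrightarrow> c \<in> V \<Longrightarrow>
               (\<forall>y\<in>D. rk y < rk x \<longrightarrow> Q y a b \<and> Q y b c \<and> Q y a c) \<Longrightarrow>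
               f x a b \<otimes>\<^bsub>G x\<^esub> f x b c = f x a c"
  shows "\<exists>L :: 'a \<Rightarrow> 'b list. (\<forall>a\<in>V. \<forall>b\<in>V. L a = L b \<longleftrightarrow> (\<forall>x\<in>D. Q x a b))
           \<and> card (L ` V) \<le> M ^ card D"
proof -
  have "\<exists>L :: 'a \<Rightarrow> 'b list. (\<forall>a\<in>V. \<forall>b\<in>V. L a = L b \<longleftrightarrow> (\<forall>x\<in>E. Q x a b))
          \<and> card (L ` V) \<le> M ^ card E"
    if "E \<subseteq> D" and "rank_closed D rk E" for E
    using that
  proof (induction "card E" arbitrary: E)
    case 0
    then have "E = {}"
      using \<open>finite D\<close> finite_subset by fastforce
    moreover have "card ((\<lambda>_. [] :: 'b list) ` V) \<le> card {[] :: 'b list}"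
      by (rule card_mono) auto
    ultimately show ?case
      by (intro exI[of _ "\<lambda>_. []"]) simp
  next
    case (Suc n)
    have "finite E" "E \<noteq> {}"
      using Suc.prems Suc.hyps(2) \<open>finite D\<close> finite_subset by fastforce+
    then obtain x where x: "x \<in> E" and closed_E': "rank_closed D rk (E - {x})"
      and lower: "\<And>y. y \<in> D \<Longrightarrow> rk y < rk x \<Longrightarrow> y \<in> E - {x}"
      using rank_closed_remove_max Suc.prems(2) by blast
    have "x \<in> D" "E - {x} \<subseteq> D"
      using x Suc.prems(1) by blast+
    have card_E': "n = card (E - {x})"
      using Suc.hyps(2) x \<open>finite E\<close> by simp
    obtain L :: "'a \<Rightarrow> 'b list" where L: "\<forall>a\<in>V. \<forall>b\<in>V. L a = L b \<longleftrightarrow> (\<forall>z\<in>E - {x}. Q z a b)"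
      and card_L: "card (L ` V) \<le> M ^ card (E - {x})"
      using Suc.hyps(1)[OF card_E' \<open>E - {x} \<subseteq> D\<close> closed_E'] by blast
    have "\<exists>L' :: 'a \<Rightarrow> 'b list. (\<forall>a\<in>V. \<forall>b\<in>V. L' a = L' b \<longleftrightarrow> (\<forall>z\<in>E - {x}. Q z a b) \<and> Q x a b)
            \<and> card (L' ` V) \<le> card (L ` V) * card (carrier (G x))"
    proof (rule refine_labelling_by_test[OF \<open>finite V\<close> _ _ L])
      show "group (G x)" "finite (carrier (G x))"
        using groups[OF \<open>x \<in> D\<close>] by blast+
      show "f x a b \<in> carrier (G x) \<and> (Q x a b \<longleftrightarrow> f x a b = \<one>\<^bsub>G x\<^esub>)"
        if "a \<in> V" "b \<in> V" "\<forall>z\<in>E - {x}. Q z a b" for a b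
        using key[OF \<open>x \<in> D\<close> that(1,2)] lower that(3) by blast
      show "f x a b \<otimes>\<^bsub>G x\<^esub> f x b c = f x a c"
        if "a \<in> V" "b \<in> V" "c \<in> V" "\<forall>z\<in>E - {x}. Q z a b" "\<forall>z\<in>E - {x}. Q z b c"
          "\<forall>z\<in>E - {x}. Q z a c" for a b c
        using cocycle[OF \<open>x \<in> D\<close> that(1-3)] lower that(4-6) by blast
    qed
    then obtain L' :: "'a \<Rightarrow> 'b list" where
        L': "\<forall>a\<in>V. \<forall>b\<in>V. L' a = L' b \<longleftrightarrow> (\<forall>z\<in>E - {x}. Q z a b) \<and> Q x a b"
        and card_L': "card (L' ` V) \<le> card (L ` V) * card (carrier (G x))"
      by blast
    have "\<forall>a\<in>V. \<forall>b\<in>V. L' a = L' b \<longleftrightarrow> (\<forall>z\<in>E. Q z a b)"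
      using L' x by blast
    moreover have "card (L' ` V) \<le> M ^ card E"
      using card_L' card_L groups[OF \<open>x \<in> D\<close>] Suc.hyps(2) card_E'
      by (metis mult.commute mult_le_mono power_Suc order_trans)
    ultimately show ?case
      by blast
  qed
  then show ?thesis
    unfolding rank_closed_def by blast
qed


definition Xbar_except :: "nat \<Rightarrow> (nat \<Rightarrow> 'a set) \<Rightarrow> nat set \<Rightarrow> nat \<Rightarrow> (nat \<Rightarrow> 'a + 'a \<times> 'a) set" where
  "Xbar_except d X S s = PiE ({1..d} - {s}) (\<lambda>i. if i \<in> S then Inr ` (X i \<times> X i) else Inl ` X i)"

lemma Xbar_except_Diff_singleton: "Xbar_except d X (S - {s}) s = Xbar_except d X S s"
  unfolding Xbar_except_def by (intro PiE_cong) auto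

lemma finite_Xbar_except:
  "(\<And>i. i \<in> {1..d} \<Longrightarrow> finite (X i)) \<Longrightarrow> finite (Xbar_except d X S s)"
  unfolding Xbar_except_def by (intro finite_PiE) auto

lemma fun_upd_in_Xbar_iff:
  assumes "w \<in> Xbar_except d X S s" and "s \<in> {1..d}"
  shows "w(s := v) \<in> Xbar d X S \<longleftrightarrow> v \<in> (if s \<in> S then Inr ` (X s \<times> X s) else Inl ` X s)"
proof
  assume "w(s := v) \<in> Xbar d X S"
  then have "(w(s := v)) s \<in> (if s \<in> S then Inr ` (X s \<times> X s) else Inl ` X s)"
    unfolding Xbar_def using assms(2) by (rule PiE_mem)
  then show "v \<in> (if s \<in> S then Inr ` (X s \<times> X s) else Inl ` X s)"
    by simp
next
  assume v: "v \<in> (if s \<in> S then Inr ` (X s \<times> X s) else Inl ` X s)"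
  have w_in: "w i \<in> (if i \<in> S then Inr ` (X i \<times> X i) else Inl ` X i)" if "i \<in> {1..d}" "i \<noteq> s" for i
    using PiE_mem[OF assms(1)[unfolded Xbar_except_def], of i] that by simp
  have w_out: "w i = undefined" if "i \<notin> {1..d}" for i
    by (rule PiE_arb[OF assms(1)[unfolded Xbar_except_def]]) (use that in blast)
  show "w(s := v) \<in> Xbar d X S"
    unfolding Xbar_def
  proof (rule PiE_I)
    fix i assume "i \<in> {1..d}"
    then show "(w(s := v)) i \<in> (if i \<in> S then Inr ` (X i \<times> X i) else Inl ` X i)"
      using v w_in by (cases "i = s") auto
  qed (use assms(2) w_out in auto)
qed

lemma fun_upd_undefined_in_Xbar_except:
  assumes "x \<in> Xbar d X S"
  shows "x(s := undefined) \<in> Xbar_except d X S s"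
  unfolding Xbar_except_def
proof (rule PiE_I)
  fix i assume "i \<in> {1..d} - {s}"
  then show "(x(s := undefined)) i \<in> (if i \<in> S then Inr ` (X i \<times> X i) else Inl ` X i)"
    using PiE_mem[OF assms[unfolded Xbar_def], of i] by simp
qed (use PiE_arb[OF assms[unfolded Xbar_def]] in auto)

lemma card_eq_sum_card_slices:
  assumes finX: "\<And>i. i \<in> {1..d} \<Longrightarrow> finite (X i)" and s: "s \<in> {1..d}" and Z: "Z \<subseteq> Xbar d X S"
  shows "card Z = (\<Sum>w\<in>Xbar_except d X S s. card {v. w(s := v) \<in> Z})"
proof -
  let ?W = "Xbar_except d X S s"
  let ?Z = "\<lambda>w. {v. w(s := v) \<in> Z}"
  have "finite (if s \<in> S then Inr ` (X s \<times> X s) else Inl ` X s)"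
    using finX[OF s] by simp
  moreover have "?Z w \<subseteq> (if s \<in> S then Inr ` (X s \<times> X s) else Inl ` X s)" if "w \<in> ?W" for w
    using fun_upd_in_Xbar_iff[OF that s] Z by blast
  ultimately have finite_slices: "finite (?Z w)" if "w \<in> ?W" for w
    using that finite_subset by blast
  have Z_eq: "Z = (\<lambda>(w, v). w(s := v)) ` Sigma ?W ?Z"
  proof (intro equalityI subsetI)
    fix x assume "x \<in> Z"
    then show "x \<in> (\<lambda>(w, v). w(s := v)) ` Sigma ?W ?Z"
      using Z by (intro image_eqI[of _ _ "(x(s := undefined), x s)"])
        (auto intro: fun_upd_undefined_in_Xbar_except)
  qed auto
  have inj: "inj_on (\<lambda>(w, v). w(s := v)) (Sigma ?W ?Z)"
  proof (rule inj_onI, clarify)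
    fix w v w' v' assume w: "w \<in> ?W" and w': "w' \<in> ?W" and eq: "w(s := v) = w'(s := v')"
    have "w s = undefined" "w' s = undefined"
      by (rule PiE_arb[OF w[unfolded Xbar_except_def]], simp,
          rule PiE_arb[OF w'[unfolded Xbar_except_def]], simp)
    then have "w = w'"
      using eq by (metis fun_upd_triv fun_upd_upd)
    then show "w = w' \<and> v = v'"
      using fun_cong[OF eq, of s] by simp
  qed
  have "card Z = card (Sigma ?W ?Z)"
    using card_image[OF inj] by (simp only: Z_eq[symmetric])
  also have "\<dots> = (\<Sum>w\<in>?W. card (?Z w))"
    using finite_Xbar_except[OF finX] finite_slices by (intro card_SigmaI) auto
  finally show ?thesis .
qed

lemma card_slice_Xbar:
  assumes "w \<in> Xbar_except d X S s" and "s \<in> {1..d}"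
  shows "card {v. w(s := v) \<in> Xbar d X S} = (if s \<in> S then (card (X s))\<^sup>2 else card (X s))"
  using fun_upd_in_Xbar_iff[OF assms]
  by (simp add: card_image card_cartesian_product power2_eq_square)

lemma card_Xbar_eq:
  assumes "\<And>i. i \<in> {1..d} \<Longrightarrow> finite (X i)" and "s \<in> {1..d}"
  shows "card (Xbar d X S) =
           card (Xbar_except d X S s) * (if s \<in> S then (card (X s))\<^sup>2 else card (X s))"
proof -
  have "card (Xbar d X S) = (\<Sum>w\<in>Xbar_except d X S s. card {v. w(s := v) \<in> Xbar d X S})"
    by (rule card_eq_sum_card_slices[where X = X, OF assms subset_refl])
  also have "\<dots> = (\<Sum>w\<in>Xbar_except d X S s. if s \<in> S then (card (X s))\<^sup>2 else card (X s))"
    by (rule sum.cong[OF refl]) (rule card_slice_Xbar[OF _ assms(2)])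
  finally show ?thesis
    by simp
qed

lemma card_slice_vimage:
  assumes "w \<in> Xbar_except d X S s" and "s \<in> {1..d}" and "Z \<subseteq> Xbar d X S"
    and "inj e" and "(if s \<in> S then Inr ` (X s \<times> X s) else Inl ` X s) \<subseteq> range e"
  shows "card {v. w(s := v) \<in> Z} = card {c. w(s := e c) \<in> Z}"
proof -
  have "{v. w(s := v) \<in> Z} \<subseteq> range e"
    using fun_upd_in_Xbar_iff[OF assms(1,2)] assms(3,5) by blast
  then have "card (e -` {v. w(s := v) \<in> Z}) = card {v. w(s := v) \<in> Z}"
    by (rule card_vimage_inj[OF assms(4)])
  then show ?thesis
    by simp
qed

lemma xhat_subset_Xbar: "xhat d X S x T \<subseteq> Xbar d X T"
  unfolding xhat_def by blast

lemma xhat_coord_eq: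
  assumes "z \<in> xhat d X U y T" and "y \<in> Xbar d X U" and "i \<notin> U - T"
  shows "z i = y i"
proof (cases "i \<in> {1..d}")
  case True
  then show ?thesis
    using assms(1,3) unfolding xhat_def by blast
next
  case False
  have "z \<in> Xbar d X T"
    using assms(1) xhat_subset_Xbar by blast
  then have "z i = undefined"
    unfolding Xbar_def using False by (rule PiE_arb)
  moreover have "y i = undefined"
    using assms(2) unfolding Xbar_def using False by (rule PiE_arb)
  ultimately show ?thesis
    by simp
qed

lemma xhat_self:
  assumes "x \<in> Xbar d X S"
  shows "xhat d X S x S = {x}"
proof (intro equalityI subsetI)
  fix z assume "z \<in> xhat d X S x S"
  then have "z = x"
    using xhat_coord_eq[OF _ assms] by (auto simp: fun_eq_iff)
  then show "z \<in> {x}"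
    by simp
qed (use assms in \<open>simp add: xhat_def\<close>)

lemma xhat_trans:
  assumes "S \<subseteq> {1..d}" "T \<subseteq> U" "U \<subseteq> S" "y \<in> xhat d X S x U" "z \<in> xhat d X U y T"
  shows "z \<in> xhat d X S x T"
proof -
  have "z i = y i" "y i = x i" if "i \<in> {1..d} - (S - T)" for i
    using assms that unfolding xhat_def by auto
  moreover have "\<exists>p. x i = Inr p \<and> (z i = Inl (fst p) \<or> z i = Inl (snd p))" if "i \<in> S - T" for i
  proof (cases "i \<in> U")
    case True
    then have "y i = x i"
      using assms(1,4) that unfolding xhat_def by auto
    moreover have "\<exists>p. y i = Inr p \<and> (z i = Inl (fst p) \<or> z i = Inl (snd p))"
      using assms(5) that True unfolding xhat_def by blast
    ultimately show ?thesis
      by simp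
  next
    case False
    then have "z i = y i"
      using assms that unfolding xhat_def by auto
    then show ?thesis
      using assms that False unfolding xhat_def by auto
  qed
  ultimately show ?thesis
    using assms(5) unfolding xhat_def by auto
qed

lemma xhat_fun_upd:
  assumes "s \<in> S" "T \<subseteq> S - {s}" "z \<in> xhat d X S x T"
  shows "z \<in> xhat d X (S - {s}) (x(s := z s)) T"
  using assms unfolding xhat_def by auto

lemma fun_upd_Inl_in_xhat:
  assumes "x \<in> Xbar d X S" "S \<subseteq> {1..d}" "s \<in> S" "x s = Inr (a, b)" "c = a \<or> c = b"
  shows "x(s := Inl c) \<in> xhat d X S x (S - {s})"
proof -
  have "c \<in> X s"
    using assms unfolding Xbar_def PiE_iff by force
  then show ?thesis
    using assms unfolding xhat_def Xbar_def PiE_iff extensional_def by auto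
qed

definition face_codes :: "nat set \<Rightarrow> (nat \<Rightarrow> nat) set" where
  "face_codes S = PiE S (\<lambda>_. {0, 1, 2})"

definition kept :: "nat set \<Rightarrow> (nat \<Rightarrow> nat) \<Rightarrow> nat set" where
  "kept S \<delta> = {i \<in> S. \<delta> i = 2}"

definition face :: "nat set \<Rightarrow> (nat \<Rightarrow> nat) \<Rightarrow> (nat \<Rightarrow> 'a + 'a \<times> 'a) \<Rightarrow> (nat \<Rightarrow> 'a + 'a \<times> 'a)" where
  "face S \<delta> x i =
     (if i \<in> S \<and> \<delta> i = 0 then Inl (fst (projr (x i)))
      else if i \<in> S \<and> \<delta> i = 1 then Inl (snd (projr (x i)))
      else x i)"

lemma finite_face_codes: "finite S \<Longrightarrow> finite (face_codes S)"
  unfolding face_codes_def by (simp add: finite_PiE)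

lemma card_face_codes: "finite S \<Longrightarrow> card (face_codes S) = 3 ^ card S"
  unfolding face_codes_def by (simp add: card_PiE numeral_3_eq_3)

lemma face_fun_upd: "s \<notin> S \<Longrightarrow> face S \<delta> (x(s := v)) = (face S \<delta> x)(s := v)"
  unfolding face_def by (auto simp: fun_eq_iff)

lemma face_codes_range: "\<delta> \<in> face_codes S \<Longrightarrow> i \<in> S \<Longrightarrow> \<delta> i \<in> {0, 1, 2}"
  unfolding face_codes_def by (rule PiE_mem)

lemma Xbar_pair:
  assumes "x \<in> Xbar d X S" "S \<subseteq> {1..d}" "i \<in> S"
  obtains p where "p \<in> X i \<times> X i" "x i = Inr p"
proof -
  have "x i \<in> (if i \<in> S then Inr ` (X i \<times> X i) else Inl ` X i)"
    using assms(1)[unfolded Xbar_def] by (rule PiE_mem) (use assms(2,3) in blast)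
  then have "x i \<in> Inr ` (X i \<times> X i)"
    using assms(3) by simp
  then show ?thesis
    using that by blast
qed

lemma face_in_Xbar:
  assumes "S \<subseteq> {1..d}" "x \<in> Xbar d X S" "S' \<subseteq> S" "\<delta> \<in> face_codes S'"
  shows "face S' \<delta> x \<in> Xbar d X ((S - S') \<union> kept S' \<delta>)"
  unfolding Xbar_def
proof (rule PiE_I)
  fix i assume i: "i \<in> {1..d}"
  show "face S' \<delta> x i \<in> (if i \<in> (S - S') \<union> kept S' \<delta> then Inr ` (X i \<times> X i) else Inl ` X i)"
  proof (cases "i \<in> S'")
    case True
    then obtain p where "p \<in> X i \<times> X i" "x i = Inr p"
      using Xbar_pair[OF assms(2,1)] assms(3) by blast
    then show ?thesis
      using face_codes_range[OF assms(4) True] True unfolding face_def kept_def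
      by (auto simp: mem_Times_iff)
  next
    case False
    then show ?thesis
      using PiE_mem[OF assms(2)[unfolded Xbar_def] i] unfolding face_def kept_def by auto
  qed
next
  fix i assume "i \<notin> {1..d}"
  then show "face S' \<delta> x i = undefined"
    using assms(1,3) PiE_arb[OF assms(2)[unfolded Xbar_def]] unfolding face_def by auto
qed

lemma face_in_xhat:
  assumes "S \<subseteq> {1..d}" "x \<in> Xbar d X S" "S' \<subseteq> S" "\<delta> \<in> face_codes S'"
  shows "face S' \<delta> x \<in> xhat d X S x ((S - S') \<union> kept S' \<delta>)"
proof -
  have "\<exists>p. x i = Inr p \<and> (face S' \<delta> x i = Inl (fst p) \<or> face S' \<delta> x i = Inl (snd p))"
    if "i \<in> S - ((S - S') \<union> kept S' \<delta>)" for i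
  proof -
    have "i \<in> S'" "\<delta> i \<noteq> 2"
      using that unfolding kept_def by auto
    moreover obtain p where "x i = Inr p"
      using Xbar_pair[OF assms(2,1)] \<open>i \<in> S'\<close> assms(3) by blast
    ultimately show ?thesis
      using face_codes_range[OF assms(4)] unfolding face_def by auto
  qed
  moreover have "face S' \<delta> x i = x i" if "i \<notin> S - ((S - S') \<union> kept S' \<delta>)" for i
    using that assms(3) unfolding face_def kept_def by auto
  ultimately show ?thesis
    using face_in_Xbar[OF assms] unfolding xhat_def by blast
qed

text \<open>A coordinate of z that is collapsed but was kept by \<delta> gets the code 0 or 1 according
  to the endpoint that z picks there.\<close>
lemma xhat_face_eq_face:
  assumes "S \<subseteq> {1..d}" "x \<in> Xbar d X S" "S' \<subseteq> S" "\<delta> \<in> face_codes S'"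
    and "S - S' \<subseteq> T" "T \<subseteq> (S - S') \<union> kept S' \<delta>"
    and z: "z \<in> xhat d X ((S - S') \<union> kept S' \<delta>) (face S' \<delta> x) T"
  shows "\<exists>\<delta>'\<in>face_codes S'. kept S' \<delta>' = T \<inter> S' \<and> z = face S' \<delta>' x"
proof -
  let ?C = "kept S' \<delta> - T"
  define \<delta>' where "\<delta>' i =
      (if i \<in> ?C then if z i = Inl (fst (projr (x i))) then 0 else 1
       else if i \<in> S' then \<delta> i else undefined)" for i
  have "\<delta>' \<in> face_codes S'"
    unfolding face_codes_def
  proof (rule PiE_I)
    fix i assume "i \<in> S'"
    then show "\<delta>' i \<in> {0, 1, 2}"
      using face_codes_range[OF assms(4)] unfolding \<delta>'_def by simp
  qed (simp add: \<delta>'_def kept_def)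
  moreover have "kept S' \<delta>' = T \<inter> S'"
    using assms(6) unfolding \<delta>'_def kept_def by auto
  moreover have "z i = face S' \<delta>' x i" for i
  proof (cases "i \<in> ?C")
    case True
    then have "i \<in> ((S - S') \<union> kept S' \<delta>) - T" "i \<in> S'" "\<delta> i = 2"
      unfolding kept_def by auto
    then obtain p where "face S' \<delta> x i = Inr p" "z i = Inl (fst p) \<or> z i = Inl (snd p)"
      using z unfolding xhat_def by blast
    moreover have "face S' \<delta> x i = x i"
      using \<open>\<delta> i = 2\<close> unfolding face_def by simp
    ultimately have "x i = Inr p" "z i = Inl (fst p) \<or> z i = Inl (snd p)"
      by simp_all
    then show ?thesis
      using True \<open>i \<in> S'\<close> unfolding face_def \<delta>'_def by auto
  next
    case False
    then have "z i = face S' \<delta> x i"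
      using xhat_coord_eq[OF z face_in_Xbar[OF assms(1-4)]] assms(5) by blast
    then show ?thesis
      using False unfolding face_def \<delta>'_def by auto
  qed
  ultimately show ?thesis
    by (auto simp: fun_eq_iff)
qed

lemma xhat_face_eq_lower_face:
  assumes "S \<subseteq> {1..d}" "s \<in> S" "x \<in> Xbar d X S" "\<delta> \<in> face_codes (S - {s})"
    and T: "T \<subset> insert s (kept (S - {s}) \<delta>)" "s \<in> T"
    and z: "z \<in> xhat d X (insert s (kept (S - {s}) \<delta>)) (face (S - {s}) \<delta> x) T"
  obtains \<delta>' where "\<delta>' \<in> face_codes (S - {s})" "card (kept (S - {s}) \<delta>') < card (kept (S - {s}) \<delta>)"
    "insert s (kept (S - {s}) \<delta>') = T" "z = face (S - {s}) \<delta>' x"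
proof -
  let ?S' = "S - {s}"
  have U_eq: "(S - ?S') \<union> kept ?S' \<delta> = insert s (kept ?S' \<delta>)"
    using assms(2) unfolding kept_def by auto
  obtain \<delta>' where \<delta>': "\<delta>' \<in> face_codes ?S'" "kept ?S' \<delta>' = T \<inter> ?S'" "z = face ?S' \<delta>' x"
    using xhat_face_eq_face[OF assms(1,3) _ assms(4), of T z] T z U_eq by auto
  have "kept ?S' \<delta>' \<subset> kept ?S' \<delta>"
    using \<delta>'(2) T unfolding kept_def by auto
  moreover have "finite (kept ?S' \<delta>)"
    using assms(1) finite_subset unfolding kept_def by fastforce
  ultimately have "card (kept ?S' \<delta>') < card (kept ?S' \<delta>)"
    by (rule psubset_card_mono[rotated])
  moreover have "insert s (kept ?S' \<delta>') = T"
    using \<delta>'(2) T unfolding kept_def by auto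
  ultimately show ?thesis
    using that \<delta>' by blast
qed

context
  fixes d :: nat and X :: "nat \<Rightarrow> 'a set"
    and Y Yo :: "nat set \<Rightarrow> (nat \<Rightarrow> 'a + 'a \<times> 'a) set"
    and F :: "nat set \<Rightarrow> (nat \<Rightarrow> 'a + 'a \<times> 'a) \<Rightarrow> 'b"
    and A :: "nat set \<Rightarrow> 'b monoid"
  assumes sys: "additive_restrictive_system d X Y Yo F A"
begin

lemma ars_at:
  assumes "S \<subseteq> {1..d}"
  shows "comm_group (A S) \<and> Yo S \<subseteq> Y S \<and> Y S \<subseteq> Xbar d X S \<and> F S \<in> Y S \<rightarrow> carrier (A S) \<and>
        {x \<in> Y S. F S x = \<one>\<^bsub>A S\<^esub>} = Yo S \<and>
        (S \<noteq> {} \<longrightarrow> Y S = {x \<in> Xbar d X S. \<forall>T. T \<subset> S \<longrightarrow> xhat d X S x T \<subseteq> Yo T}) \<and>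
        (\<forall>s \<in> S. \<forall>x1 x2 x3 p1 p2 p3.
            x1 \<in> Y S \<longrightarrow> x2 \<in> Y S \<longrightarrow> x3 \<in> Y S \<longrightarrow>
            (\<forall>i. i \<noteq> s \<longrightarrow> x1 i = x2 i \<and> x1 i = x3 i) \<longrightarrow>
            x1 s = Inr (p1, p2) \<longrightarrow> x2 s = Inr (p2, p3) \<longrightarrow> x3 s = Inr (p1, p3) \<longrightarrow>
            F S x1 \<otimes>\<^bsub>A S\<^esub> F S x2 = F S x3)"
  by (rule sys[unfolded additive_restrictive_system_def, THEN spec, THEN mp, OF assms])

lemma ars_comm_group: "S \<subseteq> {1..d} \<Longrightarrow> comm_group (A S)"
  by (drule ars_at) (elim conjE)

lemma ars_Yo_subset_Xbar: "S \<subseteq> {1..d} \<Longrightarrow> Yo S \<subseteq> Xbar d X S"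
  by (drule ars_at) (elim conjE, rule subset_trans)

lemma ars_F_closed: "S \<subseteq> {1..d} \<Longrightarrow> y \<in> Y S \<Longrightarrow> F S y \<in> carrier (A S)"
  by (drule ars_at) (elim conjE, simp add: Pi_iff)

lemma ars_Yo_iff: "S \<subseteq> {1..d} \<Longrightarrow> y \<in> Yo S \<longleftrightarrow> y \<in> Y S \<and> F S y = \<one>\<^bsub>A S\<^esub>"
  by (drule ars_at) (elim conjE, blast)

lemma ars_Y_iff:
  "S \<subseteq> {1..d} \<Longrightarrow> S \<noteq> {} \<Longrightarrow>
     y \<in> Y S \<longleftrightarrow> y \<in> Xbar d X S \<and> (\<forall>T. T \<subset> S \<longrightarrow> xhat d X S y T \<subseteq> Yo T)"
  by (drule ars_at) (elim conjE, simp)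

lemma ars_additive:
  assumes "S \<subseteq> {1..d}" "s \<in> S" "x1 \<in> Y S" "x2 \<in> Y S" "x3 \<in> Y S"
    and "\<And>i. i \<noteq> s \<Longrightarrow> x1 i = x2 i \<and> x1 i = x3 i"
    and "x1 s = Inr (p1, p2)" "x2 s = Inr (p2, p3)" "x3 s = Inr (p1, p3)"
  shows "F S x1 \<otimes>\<^bsub>A S\<^esub> F S x2 = F S x3"
proof -
  have additive: "\<forall>s \<in> S. \<forall>x1 x2 x3 p1 p2 p3.
            x1 \<in> Y S \<longrightarrow> x2 \<in> Y S \<longrightarrow> x3 \<in> Y S \<longrightarrow>
            (\<forall>i. i \<noteq> s \<longrightarrow> x1 i = x2 i \<and> x1 i = x3 i) \<longrightarrow>
            x1 s = Inr (p1, p2) \<longrightarrow> x2 s = Inr (p2, p3) \<longrightarrow> x3 s = Inr (p1, p3) \<longrightarrow>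
            F S x1 \<otimes>\<^bsub>A S\<^esub> F S x2 = F S x3"
    using ars_at[OF assms(1)] by (elim conjE)
  show ?thesis
    by (rule additive[rule_format, OF assms(2-9)])
qed

lemma xhat_subset_Yo:
  assumes "S \<subseteq> {1..d}" "T \<subseteq> S" "x \<in> Yo S"
  shows "xhat d X S x T \<subseteq> Yo T"
proof (cases "T = S")
  case True
  have "x \<in> Xbar d X S"
    using assms(3) ars_Yo_subset_Xbar[OF assms(1)] by blast
  then show ?thesis
    using True assms(3) by (simp add: xhat_self)
next
  case False
  then have "T \<subset> S" "S \<noteq> {}"
    using assms(2) by auto
  moreover have "x \<in> Y S"
    using assms(1,3) ars_Yo_iff by blast
  ultimately show ?thesis
    using ars_Y_iff[OF assms(1)] by blast
qed

text \<open>A face of x = w(s := (a, b)) that keeps the pair at s lies in Y once its lower faces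
  are good: a proper face of it either keeps s and is again such a face of lower dimension,
  or collapses s to a or b and is then a face of a good point of Yo (S - {s}).\<close>
lemma face_in_Y:
  assumes S: "S \<subseteq> {1..d}" and s: "s \<in> S" and x: "x \<in> Xbar d X S" "x s = Inr (a, b)"
    and ends: "x(s := Inl a) \<in> Yo (S - {s})" "x(s := Inl b) \<in> Yo (S - {s})"
    and \<delta>: "\<delta> \<in> face_codes (S - {s})"
    and lower: "\<forall>\<delta>'\<in>face_codes (S - {s}). card (kept (S - {s}) \<delta>') < card (kept (S - {s}) \<delta>) \<longrightarrow>
                  face (S - {s}) \<delta>' x \<in> Yo (insert s (kept (S - {s}) \<delta>'))"
  shows "face (S - {s}) \<delta> x \<in> Y (insert s (kept (S - {s}) \<delta>))"
proof -
  let ?S' = "S - {s}" and ?U = "insert s (kept (S - {s}) \<delta>)"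
  have U_eq: "(S - ?S') \<union> kept ?S' \<delta> = ?U"
    using s unfolding kept_def by auto
  have U_sub: "?U \<subseteq> S"
    using s unfolding kept_def by auto
  have face_xhat: "face ?S' \<delta> x \<in> xhat d X S x ?U"
    using face_in_xhat[OF S x(1) _ \<delta>] U_eq by auto
  have "z \<in> Yo T" if T: "T \<subset> ?U" and z: "z \<in> xhat d X ?U (face ?S' \<delta> x) T" for T z
  proof (cases "s \<in> T")
    case True
    then obtain \<delta>' where "\<delta>' \<in> face_codes ?S'" "card (kept ?S' \<delta>') < card (kept ?S' \<delta>)"
      "insert s (kept ?S' \<delta>') = T" "z = face ?S' \<delta>' x"
      using xhat_face_eq_lower_face[OF S s x(1) \<delta> T _ z] by blast
    then show ?thesis
      using lower by auto
  next
    case False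
    then have "T \<subseteq> ?S'"
      using T U_sub by auto
    have z_x: "z \<in> xhat d X S x T"
      by (rule xhat_trans[OF S _ U_sub face_xhat z]) (use T in auto)
    moreover have "s \<in> S - T"
      using s False by blast
    ultimately obtain p where "x s = Inr p" "z s = Inl (fst p) \<or> z s = Inl (snd p)"
      unfolding xhat_def by blast
    then have "z s = Inl a \<or> z s = Inl b"
      using x(2) by auto
    then have "x(s := z s) \<in> Yo ?S'"
      using ends by auto
    moreover have "z \<in> xhat d X ?S' (x(s := z s)) T"
      by (rule xhat_fun_upd[OF s \<open>T \<subseteq> ?S'\<close> z_x])
    ultimately show ?thesis
      using xhat_subset_Yo[of ?S' T] S \<open>T \<subseteq> ?S'\<close> by blast
  qed
  moreover have "face ?S' \<delta> x \<in> Xbar d X ?U"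
    using face_xhat xhat_subset_Xbar by blast
  moreover have "?U \<subseteq> {1..d}"
    using U_sub S by blast
  ultimately show ?thesis
    using ars_Y_iff[of ?U] by auto
qed

lemma Yo_slice_iff:
  assumes S: "S \<subseteq> {1..d}" and s: "s \<in> S" and x: "x \<in> Xbar d X S" "x s = Inr (a, b)"
  shows "x \<in> Yo S \<longleftrightarrow>
           x(s := Inl a) \<in> Yo (S - {s}) \<and> x(s := Inl b) \<in> Yo (S - {s}) \<and>
           (\<forall>\<delta>\<in>face_codes (S - {s}). face (S - {s}) \<delta> x \<in> Yo (insert s (kept (S - {s}) \<delta>)))"
proof
  assume "x \<in> Yo S"
  have "x(s := Inl c) \<in> Yo (S - {s})" if "c = a \<or> c = b" for c
    using xhat_subset_Yo[OF S _ \<open>x \<in> Yo S\<close>, of "S - {s}"] fun_upd_Inl_in_xhat[OF x(1) S s x(2) that]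
    by blast
  moreover have "face (S - {s}) \<delta> x \<in> Yo (insert s (kept (S - {s}) \<delta>))"
    if "\<delta> \<in> face_codes (S - {s})" for \<delta>
  proof -
    have "(S - (S - {s})) \<union> kept (S - {s}) \<delta> = insert s (kept (S - {s}) \<delta>)"
      using s unfolding kept_def by auto
    moreover have "insert s (kept (S - {s}) \<delta>) \<subseteq> S"
      using s unfolding kept_def by auto
    ultimately show ?thesis
      using face_in_xhat[OF S x(1) _ that] xhat_subset_Yo[OF S _ \<open>x \<in> Yo S\<close>] by auto
  qed
  ultimately show "x(s := Inl a) \<in> Yo (S - {s}) \<and> x(s := Inl b) \<in> Yo (S - {s}) \<and>
           (\<forall>\<delta>\<in>face_codes (S - {s}). face (S - {s}) \<delta> x \<in> Yo (insert s (kept (S - {s}) \<delta>)))"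
    by blast
next
  assume faces: "x(s := Inl a) \<in> Yo (S - {s}) \<and> x(s := Inl b) \<in> Yo (S - {s}) \<and>
           (\<forall>\<delta>\<in>face_codes (S - {s}). face (S - {s}) \<delta> x \<in> Yo (insert s (kept (S - {s}) \<delta>)))"
  define \<delta>\<^sub>0 where "\<delta>\<^sub>0 = restrict (\<lambda>_. 2 :: nat) (S - {s})"
  have "\<delta>\<^sub>0 \<in> face_codes (S - {s})"
    unfolding \<delta>\<^sub>0_def face_codes_def by simp
  moreover have "face (S - {s}) \<delta>\<^sub>0 x = x"
    unfolding \<delta>\<^sub>0_def face_def by (auto simp: fun_eq_iff)
  moreover have "insert s (kept (S - {s}) \<delta>\<^sub>0) = S"
    using s unfolding \<delta>\<^sub>0_def kept_def by auto
  ultimately show "x \<in> Yo S"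
    using faces by metis
qed

lemma mem_X_if_fun_upd_Inl_in_Yo:
  assumes "S \<subseteq> {1..d}" "s \<in> S" "w \<in> Xbar_except d X S s" "w(s := Inl c) \<in> Yo (S - {s})"
  shows "c \<in> X s"
proof -
  have "w(s := Inl c) \<in> Xbar d X (S - {s})"
    using assms(1,4) ars_Yo_subset_Xbar[of "S - {s}"] by blast
  moreover have "w \<in> Xbar_except d X (S - {s}) s"
    using assms(3) by (simp only: Xbar_except_Diff_singleton)
  ultimately show ?thesis
    using fun_upd_in_Xbar_iff[of w d X "S - {s}" s "Inl c"] assms(1,2) by auto
qed

lemma F_face_additive:
  assumes "S \<subseteq> {1..d}" "s \<in> S"
    and "U = insert s (kept (S - {s}) \<delta>)"
    and "face (S - {s}) \<delta> (w(s := Inr (a, b))) \<in> Y U" "face (S - {s}) \<delta> (w(s := Inr (b, c))) \<in> Y U"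
      "face (S - {s}) \<delta> (w(s := Inr (a, c))) \<in> Y U"
  shows "F U (face (S - {s}) \<delta> (w(s := Inr (a, b)))) \<otimes>\<^bsub>A U\<^esub>
           F U (face (S - {s}) \<delta> (w(s := Inr (b, c))))
         = F U (face (S - {s}) \<delta> (w(s := Inr (a, c))))"
proof (rule ars_additive[OF _ _ assms(4-6)])
  show "U \<subseteq> {1..d}" "s \<in> U"
    using assms(1-3) unfolding kept_def by auto
qed (simp_all add: face_fun_upd)

lemma slice_face_labelling:
  assumes S: "S \<subseteq> {1..d}" and s: "s \<in> S" and w: "w \<in> Xbar_except d X S s"
    and finite_X: "finite (X s)"
    and finA: "\<And>T. T \<subseteq> {1..d} \<Longrightarrow> finite (carrier (A T))"
    and bound: "\<And>T. T \<subseteq> {1..d} \<Longrightarrow> card (carrier (A T)) \<le> M"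
  defines "V \<equiv> {c. w(s := Inl c) \<in> Yo (S - {s})}"
  shows "\<exists>L :: 'a \<Rightarrow> 'b list.
           (\<forall>a\<in>V. \<forall>b\<in>V. L a = L b \<longleftrightarrow>
              (\<forall>\<delta>\<in>face_codes (S - {s}).
                 face (S - {s}) \<delta> (w(s := Inr (a, b))) \<in> Yo (insert s (kept (S - {s}) \<delta>))))
           \<and> card (L ` V) \<le> M ^ 3 ^ card (S - {s})"
proof -
  let ?S' = "S - {s}"
  let ?U = "\<lambda>\<delta>. insert s (kept ?S' \<delta>)"
  let ?x = "\<lambda>a b. w(s := Inr (a, b))"
  let ?Q = "\<lambda>\<delta> a b. face ?S' \<delta> (?x a b) \<in> Yo (?U \<delta>)"
  have sd: "s \<in> {1..d}"
    using S s by blast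
  have U_sub: "?U \<delta> \<subseteq> {1..d}" for \<delta>
    using S s unfolding kept_def by auto
  have finite_S': "finite ?S'"
    using S finite_subset by blast
  have V_X: "c \<in> X s" if "c \<in> V" for c
    using mem_X_if_fun_upd_Inl_in_Yo[OF S s w] that unfolding V_def by blast
  have x_in: "?x a b \<in> Xbar d X S" if "a \<in> V" "b \<in> V" for a b
    using fun_upd_in_Xbar_iff[OF w sd] s V_X that by auto
  have face_Y: "face ?S' \<delta> (?x a b) \<in> Y (?U \<delta>)"
    if "\<delta> \<in> face_codes ?S'" "a \<in> V" "b \<in> V"
      and "\<forall>\<delta>'\<in>face_codes ?S'. card (kept ?S' \<delta>') < card (kept ?S' \<delta>) \<longrightarrow> ?Q \<delta>' a b" for \<delta> a b
    by (rule face_in_Y[where a = a and b = b, OF S s x_in[OF that(2,3)]])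
      (use that in \<open>simp_all add: V_def\<close>)
  have "\<exists>L :: 'a \<Rightarrow> 'b list. (\<forall>a\<in>V. \<forall>b\<in>V. L a = L b \<longleftrightarrow> (\<forall>\<delta>\<in>face_codes ?S'. ?Q \<delta> a b))
          \<and> card (L ` V) \<le> M ^ card (face_codes ?S')"
  proof (rule iterated_refinement[where rk = "\<lambda>\<delta>. card (kept ?S' \<delta>)" and G = "\<lambda>\<delta>. A (?U \<delta>)"
        and f = "\<lambda>\<delta> a b. F (?U \<delta>) (face ?S' \<delta> (?x a b))" and Q = ?Q and V = V
        and D = "face_codes ?S'" and M = M])
    show "finite V"
      by (rule finite_subset[OF _ finite_X]) (use V_X in blast)
    show "finite (face_codes ?S')"
      using finite_S' by (rule finite_face_codes)
    show "group (A (?U \<delta>)) \<and> finite (carrier (A (?U \<delta>))) \<and> card (carrier (A (?U \<delta>))) \<le> M" for \<delta>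
      using ars_comm_group[OF U_sub] finA[OF U_sub] bound[OF U_sub] by (simp add: comm_group_def)
    show "F (?U \<delta>) (face ?S' \<delta> (?x a b)) \<in> carrier (A (?U \<delta>)) \<and>
          (?Q \<delta> a b \<longleftrightarrow> F (?U \<delta>) (face ?S' \<delta> (?x a b)) = \<one>\<^bsub>A (?U \<delta>)\<^esub>)"
      if "\<delta> \<in> face_codes ?S'" "a \<in> V" "b \<in> V"
        and "\<forall>\<delta>'\<in>face_codes ?S'. card (kept ?S' \<delta>') < card (kept ?S' \<delta>) \<longrightarrow> ?Q \<delta>' a b" for \<delta> a b
      using face_Y[OF that] ars_F_closed[OF U_sub] ars_Yo_iff[OF U_sub] by blast
    show "F (?U \<delta>) (face ?S' \<delta> (?x a b)) \<otimes>\<^bsub>A (?U \<delta>)\<^esub> F (?U \<delta>) (face ?S' \<delta> (?x b c)) =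
          F (?U \<delta>) (face ?S' \<delta> (?x a c))"
      if "\<delta> \<in> face_codes ?S'" "a \<in> V" "b \<in> V" "c \<in> V"
        and "\<forall>\<delta>'\<in>face_codes ?S'. card (kept ?S' \<delta>') < card (kept ?S' \<delta>) \<longrightarrow>
               ?Q \<delta>' a b \<and> ?Q \<delta>' b c \<and> ?Q \<delta>' a c" for \<delta> a b c
      using F_face_additive[OF S s refl] face_Y that by blast
  qed
  then show ?thesis
    using card_face_codes[OF finite_S'] by simp
qed

lemma card_slice_Yo_squared_le:
  assumes S: "S \<subseteq> {1..d}" and s: "s \<in> S" and w: "w \<in> Xbar_except d X S s"
    and finite_X: "finite (X s)"
    and finA: "\<And>T. T \<subseteq> {1..d} \<Longrightarrow> finite (carrier (A T))"
    and bound: "\<And>T. T \<subseteq> {1..d} \<Longrightarrow> card (carrier (A T)) \<le> M"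
  shows "(card {c. w(s := Inl c) \<in> Yo (S - {s})})\<^sup>2
           \<le> card {p. w(s := Inr p) \<in> Yo S} * M ^ 3 ^ card (S - {s})"
proof -
  let ?V = "{c. w(s := Inl c) \<in> Yo (S - {s})}"
  obtain L :: "'a \<Rightarrow> 'b list" where
      L: "\<forall>a\<in>?V. \<forall>b\<in>?V. L a = L b \<longleftrightarrow>
            (\<forall>\<delta>\<in>face_codes (S - {s}).
               face (S - {s}) \<delta> (w(s := Inr (a, b))) \<in> Yo (insert s (kept (S - {s}) \<delta>)))"
    and card_L: "card (L ` ?V) \<le> M ^ 3 ^ card (S - {s})"
    using slice_face_labelling[OF assms] by blast
  have V_X: "?V \<subseteq> X s"
    using mem_X_if_fun_upd_Inl_in_Yo[OF S s w] by blast
  have "w(s := Inr (a, b)) \<in> Yo S \<longleftrightarrow> a \<in> ?V \<and> b \<in> ?V \<and> L a = L b" for a b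
  proof (cases "a \<in> X s \<and> b \<in> X s")
    case True
    then have "w(s := Inr (a, b)) \<in> Xbar d X S"
      using fun_upd_in_Xbar_iff[OF w] S s by auto
    then show ?thesis
      using Yo_slice_iff[where a = a and b = b, OF S s] L by auto
  next
    case False
    then have "w(s := Inr (a, b)) \<notin> Xbar d X S"
      using fun_upd_in_Xbar_iff[OF w] S s by auto
    then show ?thesis
      using False V_X ars_Yo_subset_Xbar[OF S] by blast
  qed
  then have pairs: "{p. w(s := Inr p) \<in> Yo S} = {(a, b) \<in> ?V \<times> ?V. L a = L b}"
    by auto
  have "finite ?V"
    using V_X finite_X by (rule finite_subset)
  then have "(card ?V)\<^sup>2 \<le> card {(a, b) \<in> ?V \<times> ?V. L a = L b} * card (L ` ?V)"
    by (rule card_squared_le_card_same_label_pairs)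
  also have "\<dots> \<le> card {(a, b) \<in> ?V \<times> ?V. L a = L b} * M ^ 3 ^ card (S - {s})"
    using card_L by (rule mult_le_mono2)
  finally show ?thesis
    unfolding pairs .
qed

lemma card_Yo_Diff_squared_le:
  assumes S: "S \<subseteq> {1..d}" and s: "s \<in> S"
    and finX: "\<And>i. i \<in> {1..d} \<Longrightarrow> finite (X i)"
    and finA: "\<And>T. T \<subseteq> {1..d} \<Longrightarrow> finite (carrier (A T))"
    and bound: "\<And>T. T \<subseteq> {1..d} \<Longrightarrow> card (carrier (A T)) \<le> M"
  shows "(card (Yo (S - {s})))\<^sup>2 \<le> card (Xbar_except d X S s) * M ^ 3 ^ card (S - {s}) * card (Yo S)"
proof -
  let ?W = "Xbar_except d X S s" and ?K = "M ^ 3 ^ card (S - {s})"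
  let ?V = "\<lambda>w. card {c. w(s := Inl c) \<in> Yo (S - {s})}"
  let ?R = "\<lambda>w. card {p. w(s := Inr p) \<in> Yo S}"
  have sd: "s \<in> {1..d}"
    using S s by blast
  have Yo_S: "Yo S \<subseteq> Xbar d X S" and Yo_S': "Yo (S - {s}) \<subseteq> Xbar d X (S - {s})"
    using ars_Yo_subset_Xbar S by blast+
  have "card (Yo (S - {s})) = (\<Sum>w\<in>?W. card {v. w(s := v) \<in> Yo (S - {s})})"
    using card_eq_sum_card_slices[where X = X, OF finX sd Yo_S']
    by (simp add: Xbar_except_Diff_singleton)
  also have "\<dots> = (\<Sum>w\<in>?W. ?V w)"
    using card_slice_vimage[OF _ sd Yo_S', of _ Inl]
    by (intro sum.cong) (auto simp: Xbar_except_Diff_singleton image_subset_iff)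
  finally have V_sum: "card (Yo (S - {s})) = (\<Sum>w\<in>?W. ?V w)" .
  have "(\<Sum>w\<in>?W. ?R w) = (\<Sum>w\<in>?W. card {v. w(s := v) \<in> Yo S})"
    using card_slice_vimage[OF _ sd Yo_S, of _ Inr] s
    by (intro sum.cong) (auto simp: image_subset_iff)
  also have "\<dots> = card (Yo S)"
    using card_eq_sum_card_slices[where X = X, OF finX sd Yo_S] by simp
  finally have R_sum: "(\<Sum>w\<in>?W. ?R w) = card (Yo S)" .
  have "(card (Yo (S - {s})))\<^sup>2 \<le> card ?W * (\<Sum>w\<in>?W. (?V w)\<^sup>2)"
    unfolding V_sum by (rule sum_squared_le_card_times_sum_squares_nat)
  also have "\<dots> \<le> card ?W * (\<Sum>w\<in>?W. ?R w * ?K)"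
    using card_slice_Yo_squared_le[OF S s _ finX[OF sd] finA bound]
    by (intro mult_le_mono2 sum_mono)
  also have "\<dots> = card ?W * ?K * card (Yo S)"
    using R_sum by (simp add: sum_distrib_right[symmetric])
  finally show ?thesis .
qed

lemma density_Yo_step:
  assumes S: "S \<subseteq> {1..d}" and s: "s \<in> S"
    and finX: "\<And>i. i \<in> {1..d} \<Longrightarrow> finite (X i)"
    and finA: "\<And>T. T \<subseteq> {1..d} \<Longrightarrow> finite (carrier (A T))"
    and bound: "\<And>T. T \<subseteq> {1..d} \<Longrightarrow> card (carrier (A T)) \<le> M" and "1 \<le> M"
  shows "(density (Yo (S - {s})) (Xbar d X (S - {s})))\<^sup>2 / real M ^ 3 ^ card (S - {s})
           \<le> density (Yo S) (Xbar d X S)"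
proof -
  have sd: "s \<in> {1..d}"
    using S s by blast
  define a where "a = real (card (Yo S))"
  define b where "b = real (card (Yo (S - {s})))"
  define W where "W = real (card (Xbar_except d X S s))"
  define n where "n = real (card (X s))"
  define K where "K = real M ^ 3 ^ card (S - {s})"
  have "K > 0"
    unfolding K_def using \<open>1 \<le> M\<close> by simp
  have "b\<^sup>2 \<le> W * K * a"
    using card_Yo_Diff_squared_le[OF assms(1-5)] unfolding a_def b_def W_def K_def
    by (metis of_nat_le_iff of_nat_mult of_nat_power)
  have "density (Yo S) (Xbar d X S) = a / (W * n\<^sup>2)"
    using card_Xbar_eq[where X = X and S = S, OF finX sd] s
    unfolding density_def a_def W_def n_def by simp
  moreover have "density (Yo (S - {s})) (Xbar d X (S - {s})) = b / (W * n)"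
    using card_Xbar_eq[where X = X and S = "S - {s}", OF finX sd]
    unfolding density_def b_def W_def n_def by (simp add: Xbar_except_Diff_singleton)
  moreover have "(b / (W * n))\<^sup>2 / K \<le> a / (W * n\<^sup>2)"
  proof (cases "W * n = 0")
    case False
    then have "W > 0" "n > 0"
      unfolding W_def n_def by auto
    have "(b / (W * n))\<^sup>2 / K = b\<^sup>2 / (W\<^sup>2 * n\<^sup>2 * K)"
      by (simp add: power_divide power_mult_distrib)
    also have "\<dots> \<le> (W * K * a) / (W\<^sup>2 * n\<^sup>2 * K)"
      using \<open>b\<^sup>2 \<le> W * K * a\<close> \<open>W > 0\<close> \<open>n > 0\<close> \<open>K > 0\<close> by (intro divide_right_mono) auto
    also have "\<dots> = a / (W * n\<^sup>2)"
      using \<open>W > 0\<close> \<open>K > 0\<close> by (simp add: field_simps power2_eq_square)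
    finally show ?thesis .
  qed (auto simp: a_def power2_eq_square)
  ultimately show ?thesis
    unfolding K_def by simp
qed

lemma density_Yo_lower_bound:
  assumes finX: "\<And>i. i \<in> {1..d} \<Longrightarrow> finite (X i)"
    and finA: "\<And>T. T \<subseteq> {1..d} \<Longrightarrow> finite (carrier (A T))"
    and bound: "\<And>T. T \<subseteq> {1..d} \<Longrightarrow> card (carrier (A T)) \<le> M" and "1 \<le> M"
    and "S \<subseteq> {1..d}"
  shows "density (Yo {}) (Xbar d X {}) ^ 2 ^ card S / real M ^ 3 ^ card S
           \<le> density (Yo S) (Xbar d X S)"
proof -
  have "finite S"
    using \<open>S \<subseteq> {1..d}\<close> finite_subset by blast
  then show ?thesis
    using \<open>S \<subseteq> {1..d}\<close>
  proof (induction S rule: finite_induct)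
    case empty
    have "0 \<le> density (Yo {}) (Xbar d X {})"
      unfolding density_def by simp
    then show ?case
      using \<open>1 \<le> M\<close> by (simp add: divide_le_eq mult_le_cancel_left1)
  next
    case (insert s S)
    let ?\<beta> = "density (Yo {}) (Xbar d X {}) ^ 2 ^ card S / real M ^ 3 ^ card S"
    have "0 \<le> ?\<beta>"
      unfolding density_def by simp
    moreover have "?\<beta> \<le> density (Yo S) (Xbar d X S)"
      using insert by blast
    ultimately have "?\<beta>\<^sup>2 / real M ^ 3 ^ card S
        \<le> (density (Yo S) (Xbar d X S))\<^sup>2 / real M ^ 3 ^ card S"
      by (intro divide_right_mono power_mono) auto
    also have "\<dots> \<le> density (Yo (insert s S)) (Xbar d X (insert s S))"
      using density_Yo_step[OF insert.prems insertI1 finX finA bound \<open>1 \<le> M\<close>] insert.hyps(2) by simp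
    also have "?\<beta>\<^sup>2 / real M ^ 3 ^ card S
        = density (Yo {}) (Xbar d X {}) ^ 2 ^ card (insert s S) / real M ^ 3 ^ card (insert s S)"
      using insert.hyps
      by (simp add: power_divide power_mult[symmetric] power_add[symmetric] mult.commute)
    finally show ?case .
  qed
qed

end

theorem proposition3p2:
  fixes d :: nat and X :: "nat \<Rightarrow> 'a set"
    and Y Yo :: "nat set \<Rightarrow> (nat \<Rightarrow> 'a + 'a \<times> 'a) set"
    and F :: "nat set \<Rightarrow> (nat \<Rightarrow> 'a + 'a \<times> 'a) \<Rightarrow> 'b"
    and A :: "nat set \<Rightarrow> 'b monoid"
  assumes finX: "\<And>i. i \<in> {1..d} \<Longrightarrow> finite (X i)"
    and finA: "\<And>S. S \<subseteq> {1..d} \<Longrightarrow> finite (carrier (A S))"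
    and sys: "additive_restrictive_system d X Y Yo F A"
  shows "\<forall>S \<subseteq> {1..d}.
           density (Yo S) (Xbar d X S)
             \<ge> density (Yo {}) (Xbar d X {}) ^ (2 ^ card S)
                 / real (Max {card (carrier (A T)) | T. T \<subseteq> {1..d}}) ^ (3 ^ card S)"
proof -
  define M where "M = Max {card (carrier (A T)) | T. T \<subseteq> {1..d}}"
  have "finite {card (carrier (A T)) | T. T \<subseteq> {1..d}}"
    by (simp add: setcompr_eq_image)
  then have bound: "card (carrier (A T)) \<le> M" if "T \<subseteq> {1..d}" for T
    unfolding M_def using that by (intro Max_ge) auto
  have "\<one>\<^bsub>A {}\<^esub> \<in> carrier (A {})"
    using ars_comm_group[OF sys, of "{}"]
    by (simp add: comm_group_def group.is_monoid monoid.one_closed)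
  then have "1 \<le> M"
    using bound[of "{}"] finA[of "{}"] card_gt_0_iff[of "carrier (A {})"] by fastforce
  then show ?thesis
    using density_Yo_lower_bound[OF sys finX finA bound] unfolding M_def by blast
qed

end
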